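(* Let $R$ be a commutative unital ring and let $S \subseteq R$ be a proper unital subring such that the additive index $[R:S]$ is finite. Then there exists an ideal $I$ of $R$ with $I \subseteq S$ and $R/I$ finite (namely the conductor of $S$ in $R$, the largest ideal of $R$ contained in $S$); consequently $S/I$ is a subring of the finite ring $R/I$. Hence the proper finite-index subrings of $R$ correspond to the subrings of the finite quotient rings $R/I$, where $I$ ranges over the proper finite-index ideals of $R$. The analogous statement holds for a commutative algebra $R$ over a field $\mathbb{K}$ with "finite index" replaced by "finite $\mathbb{K}$-codimension" (for $\mathbb{K}$-subalgebras and ideals).
   Context: All rings are commutative and unital, subrings share the unit of the ambient ring. *)

theory Defs
  imports "HOL-Algebra.Algebra"
begin

text \<open>Finite codimension of a subset S (a K-subspace) of a K-module M:
  the quotient M/S is finite-dimensional over the field K, i.e. it is spanned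
  by the images of finitely many elements of M.\<close>

definition finite_codim :: "('k, 'c) ring_scheme \<Rightarrow> ('k, 'a, 'm) module_scheme \<Rightarrow> 'a set \<Rightarrow> bool" where
  "finite_codim K M S \<longleftrightarrow>
     (\<exists>B. finite B \<and> B \<subseteq> carrier M \<and>
        (\<forall>x \<in> carrier M. \<exists>s \<in> S. \<exists>c \<in> B \<rightarrow> carrier K.
            x = s \<oplus>\<^bsub>M\<^esub> (\<Oplus>\<^bsub>M\<^esub> b \<in> B. c b \<odot>\<^bsub>M\<^esub> b)))"

definition subalgebra :: "('k, 'c) ring_scheme \<Rightarrow> ('k, 'a, 'm) module_scheme \<Rightarrow> 'a set \<Rightarrow> bool" where
  "subalgebra K M S \<longleftrightarrow> subring S M \<and> (\<forall>k \<in> carrier K. \<forall>s \<in> S. k \<odot>\<^bsub>M\<^esub> s \<in> S)"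

end

theory Submission
  imports Defs
begin

text \<open>
  The conductor \<open>I = {x. x R \<subseteq> S}\<close> is the largest ideal of \<open>R\<close> inside \<open>S\<close>, and it is
  proper because it lies in \<open>S\<close>. Choose a finite \<open>T \<ni> 1\<close> with \<open>R = S + T\<close>, in the sense of
  cosets or of \<open>K\<close>-spans. An \<open>x\<close> with \<open>x T \<subseteq> S\<close> lies in \<open>S\<close> and hence satisfies
  \<open>x R \<subseteq> S\<close>, so \<open>I\<close> is the intersection of the finitely many preimages of \<open>S\<close> under
  the additive (resp. \<open>K\<close>-linear) maps \<open>x \<mapsto> x t\<close>, \<open>t \<in> T\<close>. Preimages of a subgroup of
  finite index, resp. of a subspace of finite codimension, again have this property.
\<close>

section \<open>Ideal quotients and the conductor\<close>

definition colon :: "('a, 'b) ring_scheme \<Rightarrow> 'a set \<Rightarrow> 'a set \<Rightarrow> 'a set" where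
  "colon R S T = {x \<in> carrier R. \<forall>t \<in> T. x \<otimes>\<^bsub>R\<^esub> t \<in> S}"

definition conductor :: "('a, 'b) ring_scheme \<Rightarrow> 'a set \<Rightarrow> 'a set" where
  "conductor R S = colon R S (carrier R)"

context ring
begin

lemma colon_additive_subgroup:
  assumes "additive_subgroup S R" "T \<subseteq> carrier R"
  shows "additive_subgroup (colon R S T) R"
proof -
  interpret S: additive_subgroup S R by fact
  show ?thesis
    unfolding additive_subgroup_def
  proof (rule add.subgroupI)
    show "colon R S T \<subseteq> carrier R" "colon R S T \<noteq> {}"
      using assms(2) S.zero_closed unfolding colon_def by (auto intro!: exI[of _ \<zero>])
    show "\<ominus> x \<in> colon R S T" if "x \<in> colon R S T" for x
      using that assms(2) unfolding colon_def by (auto simp: l_minus)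
    show "x \<oplus> y \<in> colon R S T" if "x \<in> colon R S T" "y \<in> colon R S T" for x y
      using that assms(2) unfolding colon_def by (auto simp: l_distr)
  qed
qed

lemma conductor_subset: "conductor R S \<subseteq> S"
proof
  fix x assume "x \<in> conductor R S"
  then have x: "x \<in> carrier R" and "\<forall>t \<in> carrier R. x \<otimes> t \<in> S"
    unfolding conductor_def colon_def by auto
  then have "x \<otimes> \<one> \<in> S" by blast
  with x show "x \<in> S" by simp
qed

lemma conductor_neq_carrier: "\<lbrakk>subring S R; S \<noteq> carrier R\<rbrakk> \<Longrightarrow> conductor R S \<noteq> carrier R"
  using conductor_subset subringE(1) by blast

lemma ideal_subset_conductor: "ideal J R \<Longrightarrow> J \<subseteq> S \<Longrightarrow> J \<subseteq> conductor R S"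
  unfolding conductor_def colon_def using ideal.I_r_closed ideal.Icarr by fastforce

lemma finite_index_from_finite_image:
  assumes H: "additive_subgroup H R" and fin: "finite (f ` carrier R)"
    and sep: "\<And>x y. \<lbrakk>x \<in> carrier R; y \<in> carrier R; f x = f y\<rbrakk> \<Longrightarrow> x \<ominus> y \<in> H"
  shows "finite (a_rcosets H)"
proof -
  interpret H: abelian_subgroup H R
    using H abelian_subgroupI3 is_abelian_group by blast
  define g where "g v = H +> inv_into (carrier R) f v" for v
  have "H +> x = g (f x)" if x: "x \<in> carrier R" for x
  proof -
    let ?y = "inv_into (carrier R) f (f x)"
    have y: "?y \<in> carrier R" "f ?y = f x"
      using x by (auto intro: inv_into_into f_inv_into_f)
    then have "?y \<in> H +> x"
      using sep[OF y(1) x] H.a_rcos_module_minus[OF ring_axioms x] by simp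
    then show ?thesis
      unfolding g_def using H.a_repr_independence' x by simp
  qed
  then have "a_rcosets H \<subseteq> g ` f ` carrier R"
    unfolding A_RCOSETS_def' by auto
  then show ?thesis
    using fin finite_surj by blast
qed

lemma finite_index_colon:
  assumes S: "additive_subgroup S R" and fin: "finite (a_rcosets S)"
    and T: "finite T" "T \<subseteq> carrier R"
  shows "finite (a_rcosets (colon R S T))"
proof (rule finite_index_from_finite_image)
  interpret S: abelian_subgroup S R
    using S abelian_subgroupI3 is_abelian_group by blast
  show "additive_subgroup (colon R S T) R"
    using colon_additive_subgroup[OF S T(2)] .
  define f where "f x = (\<lambda>t \<in> T. S +> (x \<otimes> t))" for x
  have "f ` carrier R \<subseteq> PiE T (\<lambda>_. a_rcosets S)"
    unfolding f_def using T(2) a_rcosetsI[OF S.a_subset] by (auto simp: PiE_iff)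
  then show "finite (f ` carrier R)"
    by (rule finite_subset) (simp add: finite_PiE T(1) fin)
  fix x y assume x: "x \<in> carrier R" and y: "y \<in> carrier R" and "f x = f y"
  have "(x \<ominus> y) \<otimes> t \<in> S" if t: "t \<in> T" for t
  proof -
    have xt: "x \<otimes> t \<in> carrier R" "y \<otimes> t \<in> carrier R"
      using t T(2) x y by auto
    have "S +> (x \<otimes> t) = S +> (y \<otimes> t)"
      using fun_cong[OF \<open>f x = f y\<close>, of t] t unfolding f_def by simp
    then have "x \<otimes> t \<in> S +> (y \<otimes> t)"
      using S.a_rcos_self[OF xt(1)] by simp
    then have "x \<otimes> t \<ominus> y \<otimes> t \<in> S"
      using S.a_rcos_module_minus[OF ring_axioms xt(2,1)] by simp
    moreover have "x \<otimes> t \<ominus> y \<otimes> t = (x \<ominus> y) \<otimes> t"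
      using t T(2) x y by (auto simp: minus_eq l_distr l_minus)
    ultimately show ?thesis by simp
  qed
  then show "x \<ominus> y \<in> colon R S T"
    unfolding colon_def using x y by auto
qed

lemma finite_coset_representatives:
  assumes "additive_subgroup S R" "finite (a_rcosets S)"
  obtains T where "finite T" "T \<subseteq> carrier R" "carrier R \<subseteq> (\<Union>t \<in> T. S +> t)"
proof -
  interpret S: abelian_subgroup S R
    using assms(1) abelian_subgroupI3 is_abelian_group by blast
  have "a_rcosets S = (\<lambda>x. S +> x) ` carrier R"
    unfolding A_RCOSETS_def' by auto
  then obtain T where T: "T \<subseteq> carrier R" "finite T" "a_rcosets S = (\<lambda>x. S +> x) ` T"
    using finite_subset_image[OF assms(2)] by (metis order_refl)
  have "carrier R \<subseteq> (\<Union>t \<in> T. S +> t)"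
  proof
    fix z assume z: "z \<in> carrier R"
    then have "S +> z \<in> (\<lambda>x. S +> x) ` T"
      using T(3) a_rcosetsI[OF S.a_subset z] by simp
    then show "z \<in> (\<Union>t \<in> T. S +> t)"
      using S.a_rcos_self[OF z] by auto
  qed
  with T that show ?thesis by blast
qed

end

context cring
begin

lemma conductor_ideal:
  assumes "subring S R"
  shows "ideal (conductor R S) R"
proof (rule idealI)
  show "subgroup (conductor R S) (add_monoid R)"
    using colon_additive_subgroup[of S "carrier R"] subring.axioms(1)[OF assms]
    unfolding conductor_def additive_subgroup_def by blast
  show "x \<otimes> a \<in> conductor R S" "a \<otimes> x \<in> conductor R S"
    if "a \<in> conductor R S" "x \<in> carrier R" for a x
    using that unfolding conductor_def colon_def by (auto simp: m_assoc m_lcomm)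
qed (rule ring_axioms)

lemma conductor_eq_colon:
  assumes S: "subring S R" and T: "T \<subseteq> carrier R" "carrier R \<subseteq> (\<Union>t \<in> T. S +> t)"
  shows "conductor R S = colon R S (insert \<one> T)"
proof
  show "conductor R S \<subseteq> colon R S (insert \<one> T)"
    unfolding conductor_def colon_def using T(1) by auto
  show "colon R S (insert \<one> T) \<subseteq> conductor R S"
  proof
    fix x assume x: "x \<in> colon R S (insert \<one> T)"
    then have "x \<in> carrier R" "x \<in> S" unfolding colon_def by auto
    have "x \<otimes> z \<in> S" if z: "z \<in> carrier R" for z
    proof -
      obtain t s where ts: "t \<in> T" "s \<in> S" "z = s \<oplus> t"
        using T(2) z unfolding a_r_coset_def' by blast
      have "s \<in> carrier R" "t \<in> carrier R"
        using ts T(1) subringE(1)[OF S] by auto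
      then have "x \<otimes> z = x \<otimes> s \<oplus> x \<otimes> t"
        using ts(3) \<open>x \<in> carrier R\<close> by (simp add: r_distr)
      moreover have "x \<otimes> s \<in> S" "x \<otimes> t \<in> S"
        using x ts subringE(6)[OF S] \<open>x \<in> S\<close> unfolding colon_def by auto
      ultimately show ?thesis
        using subringE(7)[OF S] by simp
    qed
    then show "x \<in> conductor R S"
      using \<open>x \<in> carrier R\<close> unfolding conductor_def colon_def by blast
  qed
qed

lemma finite_index_conductor:
  assumes S: "subring S R" and fin: "finite (a_rcosets S)"
  shows "finite (a_rcosets (conductor R S))"
proof -
  have S': "additive_subgroup S R"
    using subring.axioms(1)[OF S] by (rule additive_subgroup.intro)
  obtain T where T: "finite T" "T \<subseteq> carrier R" "carrier R \<subseteq> (\<Union>t \<in> T. S +> t)"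
    using finite_coset_representatives[OF S' fin] .
  then show ?thesis
    using conductor_eq_colon[OF S T(2,3)] finite_index_colon[OF S' fin] by simp
qed

end

lemma subring_image_Quot:
  assumes "ideal I R" "subring S R"
  shows "subring ((\<lambda>s. I +>\<^bsub>R\<^esub> s) ` S) (R Quot I)"
  using ring_hom_ring.img_is_subring[OF ideal.rcos_ring_hom_ring[OF assms(1)] assms(2)] by simp

section \<open>Subspaces of finite codimension\<close>

fun plus_span ::
  "('k, 'c) ring_scheme \<Rightarrow> ('k, 'a, 'm) module_scheme \<Rightarrow> 'a set \<Rightarrow> 'a list \<Rightarrow> 'a set" where
  "plus_span K M A [] = A"
| "plus_span K M A (b # bs) =
     {y \<oplus>\<^bsub>M\<^esub> k \<odot>\<^bsub>M\<^esub> b | y k. y \<in> plus_span K M A bs \<and> k \<in> carrier K}"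

lemma plus_span_mono: "A \<subseteq> A' \<Longrightarrow> plus_span K M A bs \<subseteq> plus_span K M A' bs"
  by (induction bs) auto

lemma plus_span_append: "plus_span K M (plus_span K M A cs) bs = plus_span K M A (bs @ cs)"
  by (induction bs) auto

definition linear_endo ::
  "('k, 'c) ring_scheme \<Rightarrow> ('k, 'a, 'm) module_scheme \<Rightarrow> ('a \<Rightarrow> 'a) \<Rightarrow> bool" where
  "linear_endo K M f \<longleftrightarrow> f \<in> carrier M \<rightarrow> carrier M \<and>
     (\<forall>x \<in> carrier M. \<forall>y \<in> carrier M. f (x \<oplus>\<^bsub>M\<^esub> y) = f x \<oplus>\<^bsub>M\<^esub> f y) \<and>
     (\<forall>a \<in> carrier K. \<forall>x \<in> carrier M. f (a \<odot>\<^bsub>M\<^esub> x) = a \<odot>\<^bsub>M\<^esub> f x)"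

context module
begin

lemma submoduleI_smult:
  assumes "H \<subseteq> carrier M" "H \<noteq> {}"
    and "\<And>x y. \<lbrakk>x \<in> H; y \<in> H\<rbrakk> \<Longrightarrow> x \<oplus>\<^bsub>M\<^esub> y \<in> H"
    and "\<And>a x. \<lbrakk>a \<in> carrier R; x \<in> H\<rbrakk> \<Longrightarrow> a \<odot>\<^bsub>M\<^esub> x \<in> H"
  shows "submodule H R M"
proof (rule submoduleI)
  show "\<ominus>\<^bsub>M\<^esub> x \<in> H" if "x \<in> H" for x
  proof -
    have "\<ominus>\<^bsub>M\<^esub> x = (\<ominus> \<one>) \<odot>\<^bsub>M\<^esub> x"
      using that assms(1) by (auto simp: smult_l_minus)
    then show ?thesis
      using that assms(4) by simp
  qed
next
  obtain x where "x \<in> H" using assms(2) by blast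
  moreover have "\<zero>\<^bsub>M\<^esub> = \<zero> \<odot>\<^bsub>M\<^esub> x"
    using calculation assms(1) by auto
  ultimately show "\<zero>\<^bsub>M\<^esub> \<in> H"
    using assms(4) by (metis R.zero_closed)
qed (use assms in auto)

lemma line_combination:
  assumes "w \<in> carrier M" "w' \<in> carrier M" "b \<in> carrier M"
    and "a \<in> carrier R" "k \<in> carrier R" "k' \<in> carrier R"
  shows "(w \<oplus>\<^bsub>M\<^esub> k \<odot>\<^bsub>M\<^esub> b) \<oplus>\<^bsub>M\<^esub> a \<odot>\<^bsub>M\<^esub> (w' \<oplus>\<^bsub>M\<^esub> k' \<odot>\<^bsub>M\<^esub> b)
       = (w \<oplus>\<^bsub>M\<^esub> a \<odot>\<^bsub>M\<^esub> w') \<oplus>\<^bsub>M\<^esub> (k \<oplus> a \<otimes> k') \<odot>\<^bsub>M\<^esub> b"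
  using assms by (simp add: smult_r_distr smult_l_distr smult_assoc1 M.a_ac)

lemma plus_span_submodule:
  assumes "submodule A R M" "set bs \<subseteq> carrier M"
  shows "submodule (plus_span R M A bs) R M"
  using assms(2)
proof (induction bs)
  case Nil
  then show ?case using assms(1) by simp
next
  case (Cons b bs)
  then have b: "b \<in> carrier M" and E: "submodule (plus_span R M A bs) R M" by auto
  note E = submoduleE[OF E]
  show ?case
  proof (rule submoduleI_smult)
    show "plus_span R M A (b # bs) \<subseteq> carrier M"
      using E(1) b by auto
    obtain y where "y \<in> plus_span R M A bs"
      using E(2) by blast
    then have "y \<oplus>\<^bsub>M\<^esub> \<zero> \<odot>\<^bsub>M\<^esub> b \<in> plus_span R M A (b # bs)"
      by auto
    then show "plus_span R M A (b # bs) \<noteq> {}"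
      by blast
  next
    fix x y assume "x \<in> plus_span R M A (b # bs)" "y \<in> plus_span R M A (b # bs)"
    then obtain x0 k y0 l where xy:
        "x = x0 \<oplus>\<^bsub>M\<^esub> k \<odot>\<^bsub>M\<^esub> b" "x0 \<in> plus_span R M A bs" "k \<in> carrier R"
        "y = y0 \<oplus>\<^bsub>M\<^esub> l \<odot>\<^bsub>M\<^esub> b" "y0 \<in> plus_span R M A bs" "l \<in> carrier R"
      by auto
    then have "x \<oplus>\<^bsub>M\<^esub> y = (x0 \<oplus>\<^bsub>M\<^esub> y0) \<oplus>\<^bsub>M\<^esub> (k \<oplus> l) \<odot>\<^bsub>M\<^esub> b"
      using line_combination[of x0 y0 b \<one> k l] E(1) b by auto
    then show "x \<oplus>\<^bsub>M\<^esub> y \<in> plus_span R M A (b # bs)"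
      using xy E(5) by auto
  next
    fix a x assume "a \<in> carrier R" "x \<in> plus_span R M A (b # bs)"
    then obtain x0 k where "x = x0 \<oplus>\<^bsub>M\<^esub> k \<odot>\<^bsub>M\<^esub> b" "x0 \<in> plus_span R M A bs" "k \<in> carrier R"
      by auto
    moreover have "a \<odot>\<^bsub>M\<^esub> (x0 \<oplus>\<^bsub>M\<^esub> k \<odot>\<^bsub>M\<^esub> b) = a \<odot>\<^bsub>M\<^esub> x0 \<oplus>\<^bsub>M\<^esub> (a \<otimes> k) \<odot>\<^bsub>M\<^esub> b"
      using calculation E(1) b \<open>a \<in> carrier R\<close> by (auto simp: smult_r_distr smult_assoc1)
    ultimately show "a \<odot>\<^bsub>M\<^esub> x \<in> plus_span R M A (b # bs)"
      using E(4) \<open>a \<in> carrier R\<close> by auto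
  qed
qed

lemma plus_span_subset:
  assumes "submodule V R M" "A \<subseteq> V" "set bs \<subseteq> V"
  shows "plus_span R M A bs \<subseteq> V"
  using assms(3)
proof (induction bs)
  case (Cons b bs)
  then show ?case
    using submoduleE[OF assms(1)] by auto
qed (use assms(2) in simp)

lemma finsum_smult_insert:
  assumes B: "finite B" "B \<subseteq> carrier M" and c: "c \<in> B \<rightarrow> carrier R"
    and b: "b \<in> carrier M" and k: "k \<in> carrier R"
  obtains c' where "c' \<in> insert b B \<rightarrow> carrier R"
    "(\<Oplus>\<^bsub>M\<^esub> a \<in> B. c a \<odot>\<^bsub>M\<^esub> a) \<oplus>\<^bsub>M\<^esub> k \<odot>\<^bsub>M\<^esub> b = (\<Oplus>\<^bsub>M\<^esub> a \<in> insert b B. c' a \<odot>\<^bsub>M\<^esub> a)"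
proof -
  define B' where "B' = B - {b}"
  define c0 where "c0 = (if b \<in> B then c b else \<zero>)"
  define c' where "c' = c(b := c0 \<oplus> k)"
  have B': "finite B'" "b \<notin> B'" "(\<lambda>a. c a \<odot>\<^bsub>M\<^esub> a) \<in> B' \<rightarrow> carrier M"
    using B c unfolding B'_def by auto
  have c0: "c0 \<in> carrier R"
    using c unfolding c0_def by auto
  have c': "c' \<in> insert b B \<rightarrow> carrier R"
    using c c0 k unfolding c'_def by auto
  define \<Sigma> where "\<Sigma> = (\<Oplus>\<^bsub>M\<^esub> a \<in> B'. c a \<odot>\<^bsub>M\<^esub> a)"
  have \<Sigma>: "\<Sigma> \<in> carrier M"
    unfolding \<Sigma>_def using B'(3) by simp
  have "(\<Oplus>\<^bsub>M\<^esub> a \<in> B. c a \<odot>\<^bsub>M\<^esub> a) = c0 \<odot>\<^bsub>M\<^esub> b \<oplus>\<^bsub>M\<^esub> \<Sigma>"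
  proof (cases "b \<in> B")
    case True
    then have "B = insert b B'" unfolding B'_def by auto
    then show ?thesis
      using M.finsum_insert[OF B'(1,2,3)] True c b unfolding \<Sigma>_def c0_def by auto
  next
    case False
    then show ?thesis
      using b \<Sigma> unfolding \<Sigma>_def c0_def B'_def by simp
  qed
  moreover have "(\<Oplus>\<^bsub>M\<^esub> a \<in> insert b B. c' a \<odot>\<^bsub>M\<^esub> a) = (c0 \<oplus> k) \<odot>\<^bsub>M\<^esub> b \<oplus>\<^bsub>M\<^esub> \<Sigma>"
  proof -
    have "insert b B = insert b B'" unfolding B'_def by auto
    moreover have c'B': "(\<lambda>a. c' a \<odot>\<^bsub>M\<^esub> a) \<in> B' \<rightarrow> carrier M"
      using c' B(2) unfolding B'_def by auto
    moreover have "(\<Oplus>\<^bsub>M\<^esub> a \<in> B'. c' a \<odot>\<^bsub>M\<^esub> a) = \<Sigma>"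
      unfolding \<Sigma>_def using B'(3) by (intro M.finsum_cong') (auto simp: c'_def B'_def)
    moreover have "c' b = c0 \<oplus> k"
      unfolding c'_def by simp
    ultimately show ?thesis
      using M.finsum_insert[OF B'(1,2) c'B'] c0 k b by simp
  qed
  ultimately have "(\<Oplus>\<^bsub>M\<^esub> a \<in> B. c a \<odot>\<^bsub>M\<^esub> a) \<oplus>\<^bsub>M\<^esub> k \<odot>\<^bsub>M\<^esub> b = (\<Oplus>\<^bsub>M\<^esub> a \<in> insert b B. c' a \<odot>\<^bsub>M\<^esub> a)"
    using c0 k b \<Sigma> by (simp add: smult_l_distr M.a_ac)
  with c' that show ?thesis by blast
qed

lemma plus_span_lincomb:
  assumes "A \<subseteq> carrier M" "set bs \<subseteq> carrier M" "x \<in> plus_span R M A bs"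
  shows "\<exists>s \<in> A. \<exists>c \<in> set bs \<rightarrow> carrier R. x = s \<oplus>\<^bsub>M\<^esub> (\<Oplus>\<^bsub>M\<^esub> b \<in> set bs. c b \<odot>\<^bsub>M\<^esub> b)"
  using assms(2,3)
proof (induction bs arbitrary: x)
  case Nil
  then show ?case
    using assms(1) by (intro bexI[of _ x] bexI[of _ "\<lambda>_. \<zero>"]) auto
next
  case (Cons b bs)
  then obtain y k where yk: "x = y \<oplus>\<^bsub>M\<^esub> k \<odot>\<^bsub>M\<^esub> b" "y \<in> plus_span R M A bs" "k \<in> carrier R"
    and b: "b \<in> carrier M" and bs: "set bs \<subseteq> carrier M"
    by auto
  obtain s c where s: "s \<in> A" "c \<in> set bs \<rightarrow> carrier R"
    "y = s \<oplus>\<^bsub>M\<^esub> (\<Oplus>\<^bsub>M\<^esub> b \<in> set bs. c b \<odot>\<^bsub>M\<^esub> b)"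
    using Cons.IH[OF bs yk(2)] by blast
  obtain c' where c': "c' \<in> set (b # bs) \<rightarrow> carrier R"
    "(\<Oplus>\<^bsub>M\<^esub> a \<in> set bs. c a \<odot>\<^bsub>M\<^esub> a) \<oplus>\<^bsub>M\<^esub> k \<odot>\<^bsub>M\<^esub> b = (\<Oplus>\<^bsub>M\<^esub> a \<in> set (b # bs). c' a \<odot>\<^bsub>M\<^esub> a)"
    using finsum_smult_insert[OF finite_set bs s(2) b yk(3)] by auto
  have "(\<lambda>a. c a \<odot>\<^bsub>M\<^esub> a) \<in> set bs \<rightarrow> carrier M"
    using s(2) bs by auto
  then have "(\<Oplus>\<^bsub>M\<^esub> a \<in> set bs. c a \<odot>\<^bsub>M\<^esub> a) \<in> carrier M"
    by simp
  then have "x = s \<oplus>\<^bsub>M\<^esub> (\<Oplus>\<^bsub>M\<^esub> a \<in> set (b # bs). c' a \<odot>\<^bsub>M\<^esub> a)"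
    unfolding yk(1) s(3) c'(2)[symmetric] using s(1) assms(1) b yk(3)
    by (simp add: M.a_assoc subsetD)
  with s(1) c'(1) show ?case by blast
qed

lemma lincomb_in_plus_span:
  assumes "A \<subseteq> carrier M" "s \<in> A"
  shows "\<lbrakk>distinct bs; set bs \<subseteq> carrier M; c \<in> set bs \<rightarrow> carrier R\<rbrakk> \<Longrightarrow>
    s \<oplus>\<^bsub>M\<^esub> (\<Oplus>\<^bsub>M\<^esub> b \<in> set bs. c b \<odot>\<^bsub>M\<^esub> b) \<in> plus_span R M A bs"
proof (induction bs)
  case Nil
  then show ?case using assms by auto
next
  case (Cons b bs)
  have f: "(\<lambda>a. c a \<odot>\<^bsub>M\<^esub> a) \<in> set bs \<rightarrow> carrier M"
    using Cons.prems by auto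
  have "s \<oplus>\<^bsub>M\<^esub> (\<Oplus>\<^bsub>M\<^esub> a \<in> set (b # bs). c a \<odot>\<^bsub>M\<^esub> a)
      = (s \<oplus>\<^bsub>M\<^esub> (\<Oplus>\<^bsub>M\<^esub> a \<in> set bs. c a \<odot>\<^bsub>M\<^esub> a)) \<oplus>\<^bsub>M\<^esub> c b \<odot>\<^bsub>M\<^esub> b"
    using M.finsum_insert[OF finite_set _ f, of b] M.finsum_closed[OF f] Cons.prems assms
    by (simp add: M.a_ac subsetD)
  moreover have "s \<oplus>\<^bsub>M\<^esub> (\<Oplus>\<^bsub>M\<^esub> a \<in> set bs. c a \<odot>\<^bsub>M\<^esub> a) \<in> plus_span R M A bs"
    using Cons by auto
  ultimately show ?case
    using Cons.prems by auto
qed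

lemma finite_codim_iff_plus_span:
  assumes "A \<subseteq> carrier M"
  shows "finite_codim R M A \<longleftrightarrow> (\<exists>bs. set bs \<subseteq> carrier M \<and> carrier M \<subseteq> plus_span R M A bs)"
proof
  assume "finite_codim R M A"
  then obtain B where B: "finite B" "B \<subseteq> carrier M" and rep:
    "\<forall>x \<in> carrier M. \<exists>s \<in> A. \<exists>c \<in> B \<rightarrow> carrier R. x = s \<oplus>\<^bsub>M\<^esub> (\<Oplus>\<^bsub>M\<^esub> b \<in> B. c b \<odot>\<^bsub>M\<^esub> b)"
    unfolding finite_codim_def by blast
  obtain bs where bs: "set bs = B" "distinct bs"
    using finite_distinct_list[OF B(1)] by blast
  have "carrier M \<subseteq> plus_span R M A bs"
  proof
    fix x assume "x \<in> carrier M"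
    then obtain s c where "s \<in> A" "c \<in> B \<rightarrow> carrier R"
      "x = s \<oplus>\<^bsub>M\<^esub> (\<Oplus>\<^bsub>M\<^esub> b \<in> B. c b \<odot>\<^bsub>M\<^esub> b)"
      using rep by blast
    then show "x \<in> plus_span R M A bs"
      using lincomb_in_plus_span[OF assms _ bs(2)] B(2) unfolding bs(1) by simp
  qed
  then show "\<exists>bs. set bs \<subseteq> carrier M \<and> carrier M \<subseteq> plus_span R M A bs"
    using bs B by blast
next
  assume "\<exists>bs. set bs \<subseteq> carrier M \<and> carrier M \<subseteq> plus_span R M A bs"
  then obtain bs where bs: "set bs \<subseteq> carrier M" "carrier M \<subseteq> plus_span R M A bs"
    by blast
  show "finite_codim R M A"
    unfolding finite_codim_def
  proof (intro exI[of _ "set bs"] conjI ballI)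
    fix x assume "x \<in> carrier M"
    then show "\<exists>s \<in> A. \<exists>c \<in> set bs \<rightarrow> carrier R. x = s \<oplus>\<^bsub>M\<^esub> (\<Oplus>\<^bsub>M\<^esub> b \<in> set bs. c b \<odot>\<^bsub>M\<^esub> b)"
      using plus_span_lincomb[OF assms bs(1)] bs(2) by blast
  qed (use bs in auto)
qed

lemma preimage_plus_line_pivot:
  assumes U: "submodule U R M" and W: "submodule W R M" and f: "linear_endo R M f"
    and b: "b \<in> carrier M"
    and u0: "u0 \<in> U" "f u0 = w0 \<oplus>\<^bsub>M\<^esub> k0 \<odot>\<^bsub>M\<^esub> b" "w0 \<in> W" "k0 \<in> Units R"
    and u: "u \<in> U" "f u = w \<oplus>\<^bsub>M\<^esub> k \<odot>\<^bsub>M\<^esub> b" "w \<in> W" "k \<in> carrier R"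
  shows "u \<in> plus_span R M {u \<in> U. f u \<in> W} [u0]"
proof -
  note U = submoduleE[OF U] and W = submoduleE[OF W]
  define t where "t = k \<otimes> inv k0"
  have k0: "k0 \<in> carrier R" "inv k0 \<in> carrier R" "inv k0 \<otimes> k0 = \<one>"
    using u0(4) by auto
  have t: "t \<in> carrier R" "\<ominus> t \<in> carrier R"
    using k0 u(4) unfolding t_def by auto
  have "\<ominus> t \<otimes> k0 = \<ominus> k"
    using k0 u(4) unfolding t_def by (metis R.l_minus R.m_assoc R.m_closed R.r_one)
  then have k: "k \<oplus> \<ominus> t \<otimes> k0 = \<zero>"
    using u(4) by (simp add: R.r_neg)
  define u' where "u' = u \<oplus>\<^bsub>M\<^esub> (\<ominus> t) \<odot>\<^bsub>M\<^esub> u0"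
  have "u' \<in> U"
    unfolding u'_def using U u0(1) u(1) t by auto
  moreover have "f u' = w \<oplus>\<^bsub>M\<^esub> (\<ominus> t) \<odot>\<^bsub>M\<^esub> w0"
  proof -
    have "f u' = f u \<oplus>\<^bsub>M\<^esub> (\<ominus> t) \<odot>\<^bsub>M\<^esub> f u0"
      unfolding u'_def using f U(1) u(1) u0(1) t unfolding linear_endo_def by (simp add: subsetD)
    also have "\<dots> = (w \<oplus>\<^bsub>M\<^esub> (\<ominus> t) \<odot>\<^bsub>M\<^esub> w0) \<oplus>\<^bsub>M\<^esub> (k \<oplus> \<ominus> t \<otimes> k0) \<odot>\<^bsub>M\<^esub> b"
      unfolding u(2) u0(2) using line_combination[of w w0 b "\<ominus> t" k k0] W(1) u(3,4) u0(3) k0 t b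
      by (simp add: subsetD)
    finally show ?thesis
      using k W(1) u(3) u0(3) t b by (simp add: subsetD)
  qed
  moreover have "u = u' \<oplus>\<^bsub>M\<^esub> t \<odot>\<^bsub>M\<^esub> u0"
    unfolding u'_def using U(1) u(1) u0(1) t by (simp add: smult_l_minus M.a_assoc subsetD M.l_neg)
  moreover have "w \<oplus>\<^bsub>M\<^esub> (\<ominus> t) \<odot>\<^bsub>M\<^esub> w0 \<in> W"
    using W u(3) u0(3) t by blast
  ultimately show ?thesis
    using t(1) by fastforce
qed

text \<open>
  If some \<open>u\<^sub>0 \<in> U\<close> is mapped outside \<open>W\<close>, its \<open>b\<close>-coefficient is a unit, and subtracting a
  multiple of \<open>u\<^sub>0\<close> clears the \<open>b\<close>-coefficient of the image of any other \<open>u\<close>.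
\<close>

lemma preimage_plus_line:
  assumes fld: "field R" and U: "submodule U R M" and W: "submodule W R M"
    and f: "linear_endo R M f" and b: "b \<in> carrier M"
  obtains cs where "set cs \<subseteq> U"
    "{u \<in> U. f u \<in> plus_span R M W [b]} \<subseteq> plus_span R M {u \<in> U. f u \<in> W} cs"
proof (cases "{u \<in> U. f u \<in> plus_span R M W [b]} \<subseteq> {u \<in> U. f u \<in> W}")
  case True
  then show ?thesis using that[of "[]"] by simp
next
  case False
  then obtain u0 where "u0 \<in> U" "f u0 \<in> plus_span R M W [b]" "f u0 \<notin> W"
    by blast
  then obtain w0 k0 where u0: "u0 \<in> U" "f u0 = w0 \<oplus>\<^bsub>M\<^esub> k0 \<odot>\<^bsub>M\<^esub> b" "w0 \<in> W" "k0 \<in> carrier R"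
    and "f u0 \<notin> W"
    by auto
  then have "k0 \<noteq> \<zero>"
    using submoduleE(1)[OF W] b by auto
  then have "k0 \<in> Units R"
    using fld u0(4) by (simp add: field.field_Units)
  then have "{u \<in> U. f u \<in> plus_span R M W [b]} \<subseteq> plus_span R M {u \<in> U. f u \<in> W} [u0]"
    using preimage_plus_line_pivot[OF U W f b u0(1-3)] by auto
  then show ?thesis
    using that[of "[u0]"] u0(1) by auto
qed

lemma preimage_plus_span:
  assumes fld: "field R" and U: "submodule U R M" and f: "linear_endo R M f"
  shows "\<lbrakk>submodule W R M; set bs \<subseteq> carrier M; f ` U \<subseteq> plus_span R M W bs\<rbrakk> \<Longrightarrow>
    \<exists>cs. set cs \<subseteq> U \<and> U \<subseteq> plus_span R M {u \<in> U. f u \<in> W} cs"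
proof (induction bs arbitrary: W rule: rev_induct)
  case Nil
  then show ?case by (intro exI[of _ "[]"]) auto
next
  case (snoc b bs)
  let ?W' = "plus_span R M W [b]"
  have b: "b \<in> carrier M" and bs: "set bs \<subseteq> carrier M"
    using snoc.prems(2) by auto
  have "submodule ?W' R M"
    using plus_span_submodule[OF snoc.prems(1), of "[b]"] b by simp
  moreover have "f ` U \<subseteq> plus_span R M ?W' bs"
    using snoc.prems(3) unfolding plus_span_append .
  ultimately obtain cs where cs: "set cs \<subseteq> U" "U \<subseteq> plus_span R M {u \<in> U. f u \<in> ?W'} cs"
    using snoc.IH bs by blast
  obtain cs' where cs': "set cs' \<subseteq> U"
    "{u \<in> U. f u \<in> ?W'} \<subseteq> plus_span R M {u \<in> U. f u \<in> W} cs'"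
    using preimage_plus_line[OF fld U snoc.prems(1) f b] .
  have "U \<subseteq> plus_span R M (plus_span R M {u \<in> U. f u \<in> W} cs') cs"
    using cs(2) plus_span_mono[OF cs'(2), of R M cs] by blast
  then have "U \<subseteq> plus_span R M {u \<in> U. f u \<in> W} (cs @ cs')"
    by (simp only: plus_span_append)
  with cs(1) cs'(1) show ?case
    by (intro exI[of _ "cs @ cs'"]) auto
qed

end

section \<open>The conductor of a subalgebra\<close>

context algebra
begin

lemma subalgebra_submodule:
  assumes "subalgebra R M S"
  shows "submodule S R M"
proof (rule submoduleI_smult)
  have S: "subring S M"
    using assms unfolding subalgebra_def by blast
  show "S \<subseteq> carrier M" "S \<noteq> {}"
    using subringE(1,2)[OF S] by auto
  show "x \<oplus>\<^bsub>M\<^esub> y \<in> S" if "x \<in> S" "y \<in> S" for x y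
    using subringE(7)[OF S that] .
  show "a \<odot>\<^bsub>M\<^esub> x \<in> S" if "a \<in> carrier R" "x \<in> S" for a x
    using assms that unfolding subalgebra_def by blast
qed

lemma right_mult_linear: "t \<in> carrier M \<Longrightarrow> linear_endo R M (\<lambda>x. x \<otimes>\<^bsub>M\<^esub> t)"
  unfolding linear_endo_def by (auto simp: l_distr smult_assoc2)

lemma colon_submodule:
  assumes S: "submodule S R M" and T: "T \<subseteq> carrier M"
  shows "submodule (colon M S T) R M"
proof (rule submoduleI_smult)
  have "\<zero>\<^bsub>M\<^esub> \<in> S"
    using additive_subgroup.zero_closed[OF additive_subgroup.intro[OF submodule.axioms(1)[OF S]]] .
  then show "colon M S T \<noteq> {}"
    using T unfolding colon_def by (auto simp: subsetD)
  show "colon M S T \<subseteq> carrier M"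
    unfolding colon_def by auto
  note S = submoduleE[OF S]
  show "x \<oplus>\<^bsub>M\<^esub> y \<in> colon M S T" if "x \<in> colon M S T" "y \<in> colon M S T" for x y
    using that T S(5) unfolding colon_def by (auto simp: l_distr subsetD)
  show "a \<odot>\<^bsub>M\<^esub> x \<in> colon M S T" if "a \<in> carrier R" "x \<in> colon M S T" for a x
    using that T S(4) unfolding colon_def by (auto simp: smult_assoc2 subsetD)
qed

lemma finite_codim_colon:
  assumes fld: "field R" and S: "submodule S R M" and fc: "finite_codim R M S"
  shows "\<lbrakk>finite T; T \<subseteq> carrier M\<rbrakk> \<Longrightarrow> finite_codim R M (colon M S T)"
proof (induction T rule: finite_induct)
  case empty
  have "colon M S {} = carrier M"
    unfolding colon_def by simp
  then show ?case
    using finite_codim_iff_plus_span[of "carrier M"] by (auto intro: exI[of _ "[]"])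
next
  case (insert t T)
  let ?U = "colon M S T"
  have t: "t \<in> carrier M" and T: "T \<subseteq> carrier M"
    using insert.prems by auto
  have U: "submodule ?U R M" and Uc: "?U \<subseteq> carrier M"
    using colon_submodule[OF S T] unfolding colon_def by auto
  obtain ds where ds: "set ds \<subseteq> carrier M" "carrier M \<subseteq> plus_span R M ?U ds"
    using insert.IH[OF T] unfolding finite_codim_iff_plus_span[OF Uc] by blast
  obtain bs where bs: "set bs \<subseteq> carrier M" "carrier M \<subseteq> plus_span R M S bs"
    using fc unfolding finite_codim_iff_plus_span[OF submoduleE(1)[OF S]] by blast
  have "(\<lambda>u. u \<otimes>\<^bsub>M\<^esub> t) ` ?U \<subseteq> plus_span R M S bs"
    using bs(2) t Uc by (auto simp: subsetD)
  then obtain cs where cs: "set cs \<subseteq> ?U" "?U \<subseteq> plus_span R M {u \<in> ?U. u \<otimes>\<^bsub>M\<^esub> t \<in> S} cs"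
    using preimage_plus_span[OF fld U right_mult_linear[OF t] S bs(1)] by blast
  have "{u \<in> ?U. u \<otimes>\<^bsub>M\<^esub> t \<in> S} = colon M S (insert t T)"
    unfolding colon_def by auto
  then have "carrier M \<subseteq> plus_span R M (plus_span R M (colon M S (insert t T)) cs) ds"
    using ds(2) plus_span_mono[OF cs(2), of R M ds] by simp
  then have "carrier M \<subseteq> plus_span R M (colon M S (insert t T)) (ds @ cs)"
    by (simp only: plus_span_append)
  moreover have "set (ds @ cs) \<subseteq> carrier M"
    using ds(1) cs(1) Uc by auto
  moreover have "colon M S (insert t T) \<subseteq> carrier M"
    unfolding colon_def by auto
  ultimately show ?case
    using finite_codim_iff_plus_span by blast
qed

lemma conductor_eq_colon_span:
  assumes S: "subalgebra R M S" and bs: "set bs \<subseteq> carrier M" "carrier M \<subseteq> plus_span R M S bs"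
  shows "conductor M S = colon M S (insert \<one>\<^bsub>M\<^esub> (set bs))"
proof
  show "conductor M S \<subseteq> colon M S (insert \<one>\<^bsub>M\<^esub> (set bs))"
    unfolding conductor_def colon_def using bs(1) by auto
  show "colon M S (insert \<one>\<^bsub>M\<^esub> (set bs)) \<subseteq> conductor M S"
  proof
    fix x assume x: "x \<in> colon M S (insert \<one>\<^bsub>M\<^esub> (set bs))"
    then have xc: "x \<in> carrier M" and "x \<in> S"
      unfolding colon_def by auto
    have sr: "subring S M" and V: "submodule (colon M S {x}) R M"
      using S colon_submodule[OF subalgebra_submodule[OF S]] xc unfolding subalgebra_def by auto
    have "S \<subseteq> colon M S {x}"
      using subringE(1,6)[OF sr] \<open>x \<in> S\<close> unfolding colon_def by auto
    moreover have "set bs \<subseteq> colon M S {x}"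
      using x bs(1) xc unfolding colon_def by (auto simp: m_comm subsetD)
    ultimately have "carrier M \<subseteq> colon M S {x}"
      using bs(2) plus_span_subset[OF V] by blast
    then show "x \<in> conductor M S"
      using xc unfolding conductor_def colon_def by (auto simp: m_comm)
  qed
qed

lemma conductor_smult_closed:
  "\<lbrakk>subalgebra R M S; k \<in> carrier R; x \<in> conductor M S\<rbrakk> \<Longrightarrow> k \<odot>\<^bsub>M\<^esub> x \<in> conductor M S"
  unfolding subalgebra_def conductor_def colon_def by (auto simp: smult_assoc2)

lemma finite_codim_conductor:
  assumes fld: "field R" and S: "subalgebra R M S" and fc: "finite_codim R M S"
  shows "finite_codim R M (conductor M S)"
proof -
  have S': "submodule S R M"
    using subalgebra_submodule[OF S] .
  obtain bs where bs: "set bs \<subseteq> carrier M" "carrier M \<subseteq> plus_span R M S bs"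
    using fc finite_codim_iff_plus_span submoduleE(1)[OF S'] by blast
  then show ?thesis
    using conductor_eq_colon_span[OF S bs] finite_codim_colon[OF fld S' fc] by simp
qed

end

theorem mainTheorem1:
  shows
  "(\<forall>(R :: ('a, 'b) ring_scheme) S.
      cring R \<and> subring S R \<and> S \<noteq> carrier R \<and> finite (a_rcosets\<^bsub>R\<^esub> S) \<longrightarrow>
      (\<exists>I. ideal I R \<and> I \<subseteq> S \<and> I \<noteq> carrier R \<and>
           (\<forall>J. ideal J R \<and> J \<subseteq> S \<longrightarrow> J \<subseteq> I) \<and>
           finite (carrier (R Quot I)) \<and>
           subring ((\<lambda>s. I +>\<^bsub>R\<^esub> s) ` S) (R Quot I)))
   \<and>
   (\<forall>(K :: ('k, 'c) ring_scheme) (R :: ('k, 'd, 'e) module_scheme) S.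
      field K \<and> algebra K R \<and> subalgebra K R S \<and> S \<noteq> carrier R \<and> finite_codim K R S \<longrightarrow>
      (\<exists>I. ideal I R \<and> (\<forall>k \<in> carrier K. \<forall>x \<in> I. k \<odot>\<^bsub>R\<^esub> x \<in> I) \<and>
           I \<subseteq> S \<and> I \<noteq> carrier R \<and>
           (\<forall>J. ideal J R \<and> J \<subseteq> S \<longrightarrow> J \<subseteq> I) \<and>
           finite_codim K R I \<and>
           subring ((\<lambda>s. I +>\<^bsub>R\<^esub> s) ` S) (R Quot I)))"
proof (intro conjI allI impI)
  fix R :: "('a, 'b) ring_scheme" and S
  assume "cring R \<and> subring S R \<and> S \<noteq> carrier R \<and> finite (a_rcosets\<^bsub>R\<^esub> S)"
  then have "cring R" and S: "subring S R" "S \<noteq> carrier R" and fin: "finite (a_rcosets\<^bsub>R\<^esub> S)"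
    by auto
  interpret cring R by fact
  show "\<exists>I. ideal I R \<and> I \<subseteq> S \<and> I \<noteq> carrier R \<and> (\<forall>J. ideal J R \<and> J \<subseteq> S \<longrightarrow> J \<subseteq> I) \<and>
      finite (carrier (R Quot I)) \<and> subring ((\<lambda>s. I +>\<^bsub>R\<^esub> s) ` S) (R Quot I)"
    using conductor_ideal[OF S(1)] conductor_subset ideal_subset_conductor conductor_neq_carrier[OF S]
      finite_index_conductor[OF S(1) fin] subring_image_Quot[OF conductor_ideal[OF S(1)] S(1)]
    by (intro exI[of _ "conductor R S"]) (auto simp: FactRing_def)
next
  fix K :: "('k, 'c) ring_scheme" and R :: "('k, 'd, 'e) module_scheme" and S
  assume "field K \<and> algebra K R \<and> subalgebra K R S \<and> S \<noteq> carrier R \<and> finite_codim K R S"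
  then have K: "field K" and "algebra K R" and S: "subalgebra K R S" "S \<noteq> carrier R"
    and fc: "finite_codim K R S"
    by auto
  interpret A: cring R by (rule algebra.M_cring) fact
  interpret algebra K R by fact
  have sr: "subring S R"
    using S(1) unfolding subalgebra_def by blast
  show "\<exists>I. ideal I R \<and> (\<forall>k \<in> carrier K. \<forall>x \<in> I. k \<odot>\<^bsub>R\<^esub> x \<in> I) \<and> I \<subseteq> S \<and> I \<noteq> carrier R \<and>
      (\<forall>J. ideal J R \<and> J \<subseteq> S \<longrightarrow> J \<subseteq> I) \<and> finite_codim K R I \<and>
      subring ((\<lambda>s. I +>\<^bsub>R\<^esub> s) ` S) (R Quot I)"
    using A.conductor_ideal[OF sr] conductor_smult_closed[OF S(1)] A.conductor_subset
      A.conductor_neq_carrier[OF sr S(2)] A.ideal_subset_conductor finite_codim_conductor[OF K S(1) fc]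
      subring_image_Quot[OF A.conductor_ideal[OF sr] sr]
    by (intro exI[of _ "conductor R S"]) auto
qed

end
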